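(* Let $n\ge0$ and, for $0\le k\le n$, let $\mathbf b^{(k)}\in\mathbb R^{n+1}$ be given by $\mathbf b^{(k)}_i=\binom{k}{i}$. Define $$\mathbf v^{\pm}_{(k)}=2^{\frac{n-k}{2}}\,\mathbf b^{(k)}\pm2^{\frac k2}\,\mathbf b^{(n-k)}.$$ Then $K^{(n)}\mathbf v^{\pm}_{(k)}=\pm2^{n/2}\,\mathbf v^{\pm}_{(k)}$ for every $k$. Moreover, the vectors $\mathbf v^{+}_{(k)}$ for $0\le k\le n/2$ together with $\mathbf v^{-}_{(k)}$ for $0\le k<n/2$ form a basis of $\mathbb R^{n+1}$; hence $K^{(n)}$ is diagonalizable with eigenvalue $2^{n/2}$ of multiplicity $\lfloor n/2\rfloor+1$ and eigenvalue $-2^{n/2}$ of multiplicity $\lceil n/2\rceil$.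
   Context: For an integer $n\ge 0$, the $n$-th Krawtchouk matrix $K^{(n)}$ is the $(n+1)\times(n+1)$ integer matrix with rows and columns indexed by $0,1,\dots,n$, whose entries are defined by $(1+t)^{n-q}(1-t)^q=\sum_{p=0}^n K^{(n)}_{pq}\,t^p$. *)

theory Defs
  imports "Jordan_Normal_Form.Jordan_Normal_Form_Uniqueness" "Jordan_Normal_Form.VS_Connect"
begin

definition krawtchouk :: "nat \<Rightarrow> int mat" where
  "krawtchouk n = mat (n+1) (n+1)
     (\<lambda>(p,q). coeff ([:1, 1:] ^ (n - q) * [:1, -1:] ^ q) p)"

definition krawtchouk_real :: "nat \<Rightarrow> real mat" where
  "krawtchouk_real n = map_mat real_of_int (krawtchouk n)"

definition bvec :: "nat \<Rightarrow> nat \<Rightarrow> real vec" where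
  "bvec n k = vec (n+1) (\<lambda>i. real (k choose i))"

definition vplus :: "nat \<Rightarrow> nat \<Rightarrow> real vec" where
  "vplus n k = (2 powr ((real n - real k) / 2)) \<cdot>\<^sub>v bvec n k
              + (2 powr (real k / 2)) \<cdot>\<^sub>v bvec n (n - k)"

definition vminus :: "nat \<Rightarrow> nat \<Rightarrow> real vec" where
  "vminus n k = (2 powr ((real n - real k) / 2)) \<cdot>\<^sub>v bvec n k
              - (2 powr (real k / 2)) \<cdot>\<^sub>v bvec n (n - k)"

end

theory Submission
  imports Defs
begin

text \<open>Summing \<open>C(k,q) (1+t)^(n-q) (1-t)^q\<close> over \<open>q\<close> gives
  \<open>(1+t)^(n-k) ((1-t) + (1+t))^k = 2^k (1+t)^(n-k)\<close>, i.e. \<open>K b^(k) = 2^k b^(n-k)\<close>.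
  So \<open>K\<close> swaps the lines through \<open>b^(k)\<close> and \<open>b^(n-k)\<close>, and the weights
  \<open>2^((n-k)/2)\<close>, \<open>2^(k/2)\<close> balance the two images so that \<open>v\<^sup>\<plusminus>_(k)\<close> is an
  eigenvector for \<open>\<plusminus>2^(n/2)\<close>. The matrix \<open>P\<close> of these eigenvectors factors as
  \<open>P = B T\<close>, where \<open>B = (C(r,i))\<close> is unitriangular and \<open>T\<close> pairs the coordinates
  \<open>r\<close> and \<open>n - r\<close> with opposite signs, hence is injective. So \<open>P\<close> is invertible,
  \<open>K = P D P\<^sup>-\<^sup>1\<close> with \<open>D\<close> diagonal, and both multiplicities of \<open>\<plusminus>2^(n/2)\<close> are
  the number of times it occurs on the diagonal of \<open>D\<close>.\<close>

lemma coeff_one_one_power: "coeff ([:1, 1:] ^ m) p = (of_nat (m choose p) :: 'a :: comm_semiring_1)"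
proof (cases "p \<le> m")
  case True
  then show ?thesis by (simp add: coeff_linear_poly_power)
next
  case False
  have "degree ([:1, 1 :: 'a:] ^ m) \<le> degree [:1, 1 :: 'a:] * m"
    by (rule degree_power_le)
  also have "\<dots> \<le> m" by simp
  finally show ?thesis using False by (simp add: coeff_eq_0 binomial_eq_0)
qed

lemma binomial_sum_krawtchouk_polys:
  assumes "k \<le> n"
  shows "(\<Sum>q\<le>n. Polynomial.smult (of_nat (k choose q)) ([:1, 1:] ^ (n - q) * [:1, -1:] ^ q))
       = Polynomial.smult (2 ^ k) ([:1, 1:] ^ (n - k) :: 'a :: comm_ring_1 poly)"
proof -
  have "(\<Sum>q\<le>n. Polynomial.smult (of_nat (k choose q)) ([:1, 1:] ^ (n - q) * [:1, -1 :: 'a:] ^ q))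
      = (\<Sum>q\<le>k. Polynomial.smult (of_nat (k choose q)) ([:1, 1:] ^ (n - q) * [:1, -1 :: 'a:] ^ q))"
    by (intro sum.mono_neutral_right) (auto simp: binomial_eq_0 not_le assms)
  also have "\<dots> = [:1, 1:] ^ (n - k)
      * (\<Sum>q\<le>k. of_nat (k choose q) * [:1, -1 :: 'a:] ^ q * [:1, 1:] ^ (k - q))"
    unfolding sum_distrib_left
  proof (rule sum.cong[OF refl])
    fix q assume "q \<in> {..k}"
    with assms have "n - q = (n - k) + (k - q)" by auto
    then show "Polynomial.smult (of_nat (k choose q)) ([:1, 1:] ^ (n - q) * [:1, -1 :: 'a:] ^ q)
        = [:1, 1:] ^ (n - k) * (of_nat (k choose q) * [:1, -1:] ^ q * [:1, 1:] ^ (k - q))"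
      by (simp add: power_add algebra_simps of_nat_poly)
  qed
  also have "\<dots> = [:1, 1:] ^ (n - k) * ([:1, -1 :: 'a:] + [:1, 1:]) ^ k"
    by (simp only: binomial_ring)
  also have "[:1, -1 :: 'a:] + [:1, 1:] = [:2:]" by simp
  finally show ?thesis by (simp add: poly_const_pow mult.commute)
qed

lemma powr_half_mult_powr: "(x :: real) powr (a / 2) * x powr b = x powr ((a + b) / 2) * x powr (b / 2)"
proof -
  have "a / 2 + b = (a + b) / 2 + b / 2" by (simp add: field_simps)
  then show ?thesis by (metis powr_add)
qed

lemma mult_mat_of_cols_eigenvectors:
  fixes A :: "'a :: comm_ring_1 mat"
  assumes A: "A \<in> carrier_mat n n" and vs: "set vs \<subseteq> carrier_vec n"
    and eig: "\<And>j. j < length vs \<Longrightarrow> A *\<^sub>v vs ! j = f j \<cdot>\<^sub>v vs ! j"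
  shows "A * mat_of_cols n vs = mat_of_cols n vs * mat_diag (length vs) f"
proof (rule eq_matI)
  fix i j assume "i < dim_row (mat_of_cols n vs * mat_diag (length vs) f)"
    and "j < dim_col (mat_of_cols n vs * mat_diag (length vs) f)"
  then have i: "i < n" and j: "j < length vs" by (auto simp: mat_diag_def)
  have vj: "vs ! j \<in> carrier_vec n" using vs j by auto
  have "(A * mat_of_cols n vs) $$ (i, j) = (A *\<^sub>v vs ! j) $ i"
    using A i j vj by simp
  also have "\<dots> = f j * vs ! j $ i"
    using eig[OF j] i vj by simp
  also have "\<dots> = (mat_of_cols n vs * mat_diag (length vs) f) $$ (i, j)"
    using i j by (subst mat_diag_mult_right[OF mat_of_cols_carrier(1)]) (simp add: mat_of_cols_def)
  finally show "(A * mat_of_cols n vs) $$ (i, j)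
      = (mat_of_cols n vs * mat_diag (length vs) f) $$ (i, j)" .
qed (use A in \<open>auto simp: mat_diag_def\<close>)

lemma similar_mat_wit_of_det_nonzero:
  fixes A :: "'a :: field mat"
  assumes A: "A \<in> carrier_mat n n" and P: "P \<in> carrier_mat n n" and D: "D \<in> carrier_mat n n"
    and "det P \<noteq> 0" and AP: "A * P = P * D"
  shows "\<exists>Q. similar_mat_wit A D P Q"
proof -
  from det_non_zero_imp_unit[OF P \<open>det P \<noteq> 0\<close>]
  obtain Q where Q: "Q \<in> carrier_mat n n" "Q * P = 1\<^sub>m n" "P * Q = 1\<^sub>m n"
    by (auto simp: Units_def ring_mat_def)
  have "A = A * (P * Q)" using A Q by simp
  also have "\<dots> = A * P * Q" using A P Q by (simp only: assoc_mult_mat)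
  also have "\<dots> = P * D * Q" by (simp add: AP)
  finally show ?thesis using A P D Q by (blast intro: similar_mat_witI)
qed

lemma jordan_matrix_unit_blocks:
  "jordan_matrix (map (\<lambda>x. (1, x)) xs) = mat_diag (length xs) (\<lambda>i. xs ! i)"
proof (induction xs)
  case Nil
  show ?case by (auto simp: jordan_matrix_def mat_diag_def)
next
  case (Cons x xs)
  have "sum_list (map fst (map (\<lambda>x. (1 :: nat, x)) xs)) = length xs" by (induction xs) auto
  then show ?case unfolding list.map jordan_matrix_Cons Cons
    by (intro eq_matI) (auto simp: mat_diag_def nth_Cons')
qed

lemma jordan_nf_of_similar_mat_diag:
  assumes "similar_mat A (mat_diag n f)"
  shows "jordan_nf A (map (\<lambda>i. (1, f i)) [0..<n])"
proof -
  have "mat_diag n f = jordan_matrix (map (\<lambda>x. (1, x)) (map f [0..<n]))"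
    unfolding jordan_matrix_unit_blocks by (auto simp: mat_diag_def)
  then show ?thesis using assms by (auto simp: jordan_nf_def o_def)
qed

lemma sum_list_fst_filter_unit_blocks:
  "sum_list (map fst (filter (\<lambda>na. snd na = a) (map (\<lambda>x. (1 :: nat, f x)) xs)))
     = length (filter (\<lambda>x. f x = a) xs)"
  by (induction xs) auto

lemma order_char_poly_similar_mat_diag:
  fixes A :: "'a :: field mat"
  assumes "similar_mat A (mat_diag n f)"
  shows "Polynomial.order a (char_poly A) = card {i. i < n \<and> f i = a}"
  unfolding jordan_nf_order[OF jordan_nf_of_similar_mat_diag[OF assms]]
    sum_list_fst_filter_unit_blocks length_filter_conv_card
  by (auto intro!: arg_cong[where f = card])

lemma dim_gen_eigenspace_similar_mat_diag:
  fixes A :: "'a :: field mat"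
  assumes "similar_mat A (mat_diag n f)"
  shows "dim_gen_eigenspace A a 1 = card {i. i < n \<and> f i = a}"
proof -
  have "(\<Sum>m\<leftarrow>map fst [(m, e)\<leftarrow>map (\<lambda>i. (1 :: nat, f i)) xs . e = a]. min 1 m)
      = length (filter (\<lambda>i. f i = a) xs)" for xs
    by (induction xs) auto
  then show ?thesis
    unfolding dim_gen_eigenspace[OF jordan_nf_of_similar_mat_diag[OF assms]] length_filter_conv_card
    by (auto intro!: arg_cong[where f = card])
qed

lemma cols_basis_of_det_nonzero:
  fixes P :: "'a :: field mat"
  assumes P: "P \<in> carrier_mat n n" and "det P \<noteq> 0"
  shows "distinct (cols P)" and "vectorspace.basis class_ring (module_vec TYPE('a) n) (set (cols P))"
proof -
  interpret vec_space "TYPE('a)" n .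
  have "col P i \<noteq> col P j" if "i < n" "j < n" "i \<noteq> j" for i j
    using det_identical_columns[OF P that(3) that(1,2)] \<open>det P \<noteq> 0\<close> by auto
  then show distinct: "distinct (cols P)" using P by (auto simp: distinct_conv_nth)
  have "lin_indpt (set (cols P))"
    using lin_dep_cols_imp_det_0[OF P] \<open>det P \<noteq> 0\<close> by auto
  moreover have "card (set (cols P)) = n" using distinct_card[OF distinct] P by simp
  moreover have "set (cols P) \<subseteq> carrier_vec n" using P cols_dim by blast
  ultimately show "basis (set (cols P))"
    by (intro dim_li_is_basis fin_dim) (auto simp: dim_is_n)
qed

lemma krawtchouk_real_carrier: "krawtchouk_real n \<in> carrier_mat (Suc n) (Suc n)"
  by (simp add: krawtchouk_real_def krawtchouk_def)

lemma bvec_carrier [simp]: "bvec n k \<in> carrier_vec (Suc n)"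
  by (simp add: bvec_def)

lemma krawtchouk_real_mult_bvec:
  assumes "k \<le> n"
  shows "krawtchouk_real n *\<^sub>v bvec n k = 2 ^ k \<cdot>\<^sub>v bvec n (n - k)"
proof (rule eq_vecI)
  fix i assume "i < dim_vec (2 ^ k \<cdot>\<^sub>v bvec n (n - k))"
  then have i: "i < Suc n" by (simp add: bvec_def)
  have "(krawtchouk_real n *\<^sub>v bvec n k) $ i
      = (\<Sum>q\<le>n. real_of_int (coeff ([:1, 1:] ^ (n - q) * [:1, -1:] ^ q) i) * real (k choose q))"
    using i by (simp add: krawtchouk_real_def krawtchouk_def bvec_def scalar_prod_def atLeast0_atMost_Suc
        atLeast0LessThan lessThan_Suc_atMost)
  also have "\<dots> = real_of_int (coeff (\<Sum>q\<le>n. Polynomial.smult (of_nat (k choose q))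
      ([:1, 1:] ^ (n - q) * [:1, -1 :: int:] ^ q)) i)"
    unfolding coeff_sum of_int_sum by (rule sum.cong) auto
  also have "\<dots> = 2 ^ k * real (n - k choose i)"
    unfolding binomial_sum_krawtchouk_polys[OF assms] by (simp add: coeff_one_one_power)
  finally show "(krawtchouk_real n *\<^sub>v bvec n k) $ i = (2 ^ k \<cdot>\<^sub>v bvec n (n - k)) $ i"
    using i by (simp add: bvec_def)
qed (simp add: krawtchouk_real_def krawtchouk_def bvec_def)

lemma krawtchouk_real_mult_bvec_pair:
  assumes "k \<le> n"
  shows "krawtchouk_real n *\<^sub>v (a \<cdot>\<^sub>v bvec n k + b \<cdot>\<^sub>v bvec n (n - k))
       = (a * 2 ^ k) \<cdot>\<^sub>v bvec n (n - k) + (b * 2 ^ (n - k)) \<cdot>\<^sub>v bvec n k"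
  using assms krawtchouk_real_mult_bvec[of k n] krawtchouk_real_mult_bvec[of "n - k" n]
  by (simp add: mult_add_distrib_mat_vec[OF krawtchouk_real_carrier]
      mult_mat_vec[OF krawtchouk_real_carrier] smult_smult_assoc)

lemma krawtchouk_real_balanced_pair_eigen:
  assumes "k \<le> n" and "\<sigma>\<^sup>2 = 1"
  defines "v \<equiv> (2 powr ((real n - real k) / 2)) \<cdot>\<^sub>v bvec n k
                + (\<sigma> * 2 powr (real k / 2)) \<cdot>\<^sub>v bvec n (n - k)"
  shows "krawtchouk_real n *\<^sub>v v = (\<sigma> * 2 powr (real n / 2)) \<cdot>\<^sub>v v"
proof -
  have "2 powr (real k / 2) * 2 ^ (n - k) = 2 powr (real n / 2) * 2 powr ((real n - real k) / 2)"
    using powr_half_mult_powr[of 2 "real k" "real n - real k"] assms(1)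
    by (simp add: powr_realpow[symmetric] of_nat_diff)
  moreover have "2 powr ((real n - real k) / 2) * 2 ^ k = 2 powr (real n / 2) * 2 powr (real k / 2)"
    using powr_half_mult_powr[of 2 "real n - real k" "real k"]
    by (simp add: powr_realpow[symmetric])
  ultimately show ?thesis
    unfolding v_def krawtchouk_real_mult_bvec_pair[OF assms(1)]
    by (intro eq_vecI)
      (auto simp: bvec_def algebra_simps \<open>\<sigma>\<^sup>2 = 1\<close>[unfolded power2_eq_square])
qed

lemma krawtchouk_real_mult_vplus:
  assumes "k \<le> n"
  shows "krawtchouk_real n *\<^sub>v vplus n k = (2 powr (real n / 2)) \<cdot>\<^sub>v vplus n k"
  using krawtchouk_real_balanced_pair_eigen[OF assms, of 1] by (simp add: vplus_def)

lemma krawtchouk_real_mult_vminus: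
  assumes "k \<le> n"
  shows "krawtchouk_real n *\<^sub>v vminus n k = (- (2 powr (real n / 2))) \<cdot>\<^sub>v vminus n k"
proof -
  have "vminus n k = (2 powr ((real n - real k) / 2)) \<cdot>\<^sub>v bvec n k
                   + (- 1 * 2 powr (real k / 2)) \<cdot>\<^sub>v bvec n (n - k)"
    by (intro eq_vecI) (auto simp: vminus_def bvec_def)
  then show ?thesis using krawtchouk_real_balanced_pair_eigen[OF assms, of "- 1"] by simp
qed

definition eigensign :: "nat \<Rightarrow> nat \<Rightarrow> real" where
  "eigensign n k = (if 2 * k \<le> n then 1 else - 1)"

text \<open>Indexing \<open>v\<^sup>-_(n-k)\<close> by \<open>k\<close> gives every column the same shape
  \<open>\<plusminus>2^((n-k)/2) b^(k) + 2^(k/2) b^(n-k)\<close>, which is what the factorisation \<open>P = B T\<close> needs.\<close>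
definition krawtchouk_eigenvector :: "nat \<Rightarrow> nat \<Rightarrow> real vec" where
  "krawtchouk_eigenvector n k = (if 2 * k \<le> n then vplus n k else vminus n (n - k))"

definition krawtchouk_eigenvector_mat :: "nat \<Rightarrow> real mat" where
  "krawtchouk_eigenvector_mat n = mat_of_cols (Suc n) (map (krawtchouk_eigenvector n) [0..<Suc n])"

definition binomial_mat :: "nat \<Rightarrow> real mat" where
  "binomial_mat n = mat (Suc n) (Suc n) (\<lambda>(i, r). real (r choose i))"

definition pairing_mat :: "nat \<Rightarrow> real mat" where
  "pairing_mat n = mat (Suc n) (Suc n) (\<lambda>(r, k).
     (if r = k then eigensign n k * 2 powr ((real n - real k) / 2) else 0)
     + (if r = n - k then 2 powr (real k / 2) else 0))"

lemma krawtchouk_eigenvector_carrier [simp]: "krawtchouk_eigenvector n k \<in> carrier_vec (Suc n)"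
  by (simp add: krawtchouk_eigenvector_def vplus_def vminus_def)

lemma krawtchouk_real_mult_eigenvector:
  assumes "k \<le> n"
  shows "krawtchouk_real n *\<^sub>v krawtchouk_eigenvector n k
       = (eigensign n k * 2 powr (real n / 2)) \<cdot>\<^sub>v krawtchouk_eigenvector n k"
  using assms krawtchouk_real_mult_vplus[of k n] krawtchouk_real_mult_vminus[of "n - k" n]
  by (simp add: krawtchouk_eigenvector_def eigensign_def)

lemma krawtchouk_eigenvector_index:
  assumes "k \<le> n" and "i \<le> n"
  shows "krawtchouk_eigenvector n k $ i
       = eigensign n k * 2 powr ((real n - real k) / 2) * real (k choose i)
         + 2 powr (real k / 2) * real (n - k choose i)"
  using assms
  by (simp add: krawtchouk_eigenvector_def eigensign_def vplus_def vminus_def bvec_def of_nat_diff)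

lemma krawtchouk_eigenvector_image:
  "krawtchouk_eigenvector n ` {..n} = vplus n ` {k. 2 * k \<le> n} \<union> vminus n ` {k. 2 * k < n}"
proof (intro equalityI subsetI)
  fix v assume "v \<in> krawtchouk_eigenvector n ` {..n}"
  then show "v \<in> vplus n ` {k. 2 * k \<le> n} \<union> vminus n ` {k. 2 * k < n}"
    by (auto simp: krawtchouk_eigenvector_def)
next
  fix v assume "v \<in> vplus n ` {k. 2 * k \<le> n} \<union> vminus n ` {k. 2 * k < n}"
  then consider k where "2 * k \<le> n" "v = vplus n k" | k where "2 * k < n" "v = vminus n k"
    by auto
  then show "v \<in> krawtchouk_eigenvector n ` {..n}"
  proof cases
    case (1 k)
    then have "v = krawtchouk_eigenvector n k" by (simp add: krawtchouk_eigenvector_def)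
    with \<open>2 * k \<le> n\<close> show ?thesis by auto
  next
    case (2 k)
    then have "v = krawtchouk_eigenvector n (n - k)" by (auto simp: krawtchouk_eigenvector_def)
    then show ?thesis by auto
  qed
qed

lemma krawtchouk_eigenvector_mat_carrier: "krawtchouk_eigenvector_mat n \<in> carrier_mat (Suc n) (Suc n)"
  using mat_of_cols_carrier(1)[of "Suc n" "map (krawtchouk_eigenvector n) [0..<Suc n]"]
  by (simp add: krawtchouk_eigenvector_mat_def del: upt_Suc)

lemma krawtchouk_eigenvector_mat_index:
  assumes "i \<le> n" and "j \<le> n"
  shows "krawtchouk_eigenvector_mat n $$ (i, j) = krawtchouk_eigenvector n j $ i"
  using assms by (simp add: krawtchouk_eigenvector_mat_def mat_of_cols_def del: upt_Suc)

lemma krawtchouk_real_mult_eigenvector_mat: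
  "krawtchouk_real n * krawtchouk_eigenvector_mat n
     = krawtchouk_eigenvector_mat n * mat_diag (Suc n) (\<lambda>k. eigensign n k * 2 powr (real n / 2))"
  using mult_mat_of_cols_eigenvectors[OF krawtchouk_real_carrier[of n],
      where vs = "map (krawtchouk_eigenvector n) [0..<Suc n]" and f = "\<lambda>k. eigensign n k * 2 powr (real n / 2)"]
  by (simp add: krawtchouk_eigenvector_mat_def krawtchouk_real_mult_eigenvector image_subset_iff del: upt_Suc)

lemma krawtchouk_eigenvector_mat_factorization: "krawtchouk_eigenvector_mat n = binomial_mat n * pairing_mat n"
proof (rule eq_matI)
  fix i j assume "i < dim_row (binomial_mat n * pairing_mat n)" "j < dim_col (binomial_mat n * pairing_mat n)"
  then have i: "i \<le> n" and j: "j \<le> n" by (auto simp: binomial_mat_def pairing_mat_def)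
  have "(binomial_mat n * pairing_mat n) $$ (i, j)
      = (\<Sum>r<Suc n. real (r choose i) * (if r = j then eigensign n j * 2 powr ((real n - real j) / 2) else 0))
      + (\<Sum>r<Suc n. real (r choose i) * (if r = n - j then 2 powr (real j / 2) else 0))"
    using i j by (simp add: binomial_mat_def pairing_mat_def scalar_prod_def distrib_left sum.distrib
        atLeast0LessThan)
  also have "\<dots> = krawtchouk_eigenvector n j $ i"
    using i j by (simp add: krawtchouk_eigenvector_index if_distrib[of "\<lambda>x. _ * x"] cong: if_cong)
  finally show "krawtchouk_eigenvector_mat n $$ (i, j) = (binomial_mat n * pairing_mat n) $$ (i, j)"
    using i j by (simp add: krawtchouk_eigenvector_mat_index)
qed (simp_all add: krawtchouk_eigenvector_mat_def binomial_mat_def pairing_mat_def)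

lemma binomial_mat_carrier: "binomial_mat n \<in> carrier_mat (Suc n) (Suc n)"
  by (simp add: binomial_mat_def)

lemma det_binomial_mat: "det (binomial_mat n) = 1"
proof -
  have "det (binomial_mat n) = prod_list (diag_mat (binomial_mat n))"
    by (rule det_upper_triangular) (auto simp: upper_triangular_def binomial_mat_def)
  also have "diag_mat (binomial_mat n) = map (\<lambda>_. 1) [0..<Suc n]"
    by (auto simp: diag_mat_def binomial_mat_def simp del: upt_Suc intro!: map_cong)
  finally show ?thesis by (simp add: map_replicate_const del: upt_Suc)
qed

lemma pairing_mat_carrier: "pairing_mat n \<in> carrier_mat (Suc n) (Suc n)"
  by (simp add: pairing_mat_def)

lemma pairing_mat_mult_vec_index:
  assumes v: "v \<in> carrier_vec (Suc n)" and r: "r \<le> n"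
  shows "(pairing_mat n *\<^sub>v v) $ r = 2 powr ((real n - real r) / 2) * (eigensign n r * v $ r + v $ (n - r))"
proof -
  have "(pairing_mat n *\<^sub>v v) $ r = (\<Sum>k<Suc n. pairing_mat n $$ (r, k) * v $ k)"
    using pairing_mat_carrier[of n] v r
    by (simp add: scalar_prod_def atLeast0LessThan mult.commute)
  also have "\<dots> = (\<Sum>k<Suc n. (if k = r then eigensign n r * 2 powr ((real n - real r) / 2) * v $ r else 0)
      + (if k = n - r then 2 powr (real (n - r) / 2) * v $ (n - r) else 0))"
    using r by (intro sum.cong) (auto simp: pairing_mat_def algebra_simps)
  also have "\<dots> = eigensign n r * 2 powr ((real n - real r) / 2) * v $ r
      + 2 powr (real (n - r) / 2) * v $ (n - r)"
    using r by (cases "r = 0") (auto simp: sum.distrib)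
  also have "\<dots> = 2 powr ((real n - real r) / 2) * (eigensign n r * v $ r + v $ (n - r))"
    using r by (simp add: of_nat_diff algebra_simps)
  finally show ?thesis .
qed

text \<open>Coordinates \<open>r \<noteq> n - r\<close> are paired with opposite signs, and the middle
  coordinate, if any, has sign \<open>+1\<close>.\<close>
lemma pairing_mat_mult_vec_eq_0:
  assumes v: "v \<in> carrier_vec (Suc n)" and "pairing_mat n *\<^sub>v v = 0\<^sub>v (Suc n)"
  shows "v = 0\<^sub>v (Suc n)"
proof (rule eq_vecI)
  have pair: "eigensign n r * v $ r + v $ (n - r) = 0" if "r \<le> n" for r
    using pairing_mat_mult_vec_index[OF v that] assms(2) that by simp
  fix r assume "r < dim_vec (0\<^sub>v (Suc n))"
  then have r: "r \<le> n" by simp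
  have "n - (n - r) = r" using r by simp
  with pair[OF r] pair[of "n - r"] show "v $ r = 0\<^sub>v (Suc n) $ r"
    using r by (cases "2 * r = n") (auto simp: eigensign_def split: if_splits)
qed (use v in simp)

lemma det_krawtchouk_eigenvector_mat: "det (krawtchouk_eigenvector_mat n) \<noteq> 0"
proof -
  have "det (pairing_mat n) \<noteq> 0"
    using det_0_iff_vec_prod_zero[OF pairing_mat_carrier] pairing_mat_mult_vec_eq_0 by blast
  then show ?thesis
    by (simp add: krawtchouk_eigenvector_mat_factorization det_binomial_mat
        det_mult[OF binomial_mat_carrier pairing_mat_carrier])
qed

lemma card_eigensign_plus:
  "card {k. k < Suc n \<and> eigensign n k * 2 powr (real n / 2) = 2 powr (real n / 2)} = n div 2 + 1"
proof -
  have "{k. k < Suc n \<and> eigensign n k * 2 powr (real n / 2) = 2 powr (real n / 2)} = {..n div 2}"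
    by (auto simp: eigensign_def)
  then show ?thesis by simp
qed

lemma card_eigensign_minus:
  "card {k. k < Suc n \<and> eigensign n k * 2 powr (real n / 2) = - (2 powr (real n / 2))} = (n + 1) div 2"
proof -
  have "{k. k < Suc n \<and> eigensign n k * 2 powr (real n / 2) = - (2 powr (real n / 2))} = {n div 2 + 1..<Suc n}"
    by (auto simp: eigensign_def)
  then show ?thesis by simp
qed

theorem mainTheorem13:
  fixes n :: nat
  defines "K \<equiv> krawtchouk_real n"
    and "S \<equiv> vplus n ` {k. 2 * k \<le> n} \<union> vminus n ` {k. 2 * k < n}"
  shows "(\<forall>k \<le> n. K *\<^sub>v vplus n k = (2 powr (real n / 2)) \<cdot>\<^sub>v vplus n k
                 \<and> K *\<^sub>v vminus n k = (- (2 powr (real n / 2))) \<cdot>\<^sub>v vminus n k)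
    \<and> card S = n + 1
    \<and> vectorspace.basis class_ring (module_vec TYPE(real) (n + 1)) S
    \<and> (\<exists>P Q D. similar_mat_wit K D P Q \<and> diagonal_mat D)
    \<and> Polynomial.order (2 powr (real n / 2)) (char_poly K) = n div 2 + 1
    \<and> Polynomial.order (- (2 powr (real n / 2))) (char_poly K) = (n + 1) div 2
    \<and> dim_gen_eigenspace K (2 powr (real n / 2)) 1 = n div 2 + 1
    \<and> dim_gen_eigenspace K (- (2 powr (real n / 2))) 1 = (n + 1) div 2"
proof -
  let ?P = "krawtchouk_eigenvector_mat n"
  let ?D = "mat_diag (Suc n) (\<lambda>k. eigensign n k * 2 powr (real n / 2))"
  obtain Q where "similar_mat_wit K ?D ?P Q"
    using similar_mat_wit_of_det_nonzero[OF krawtchouk_real_carrier krawtchouk_eigenvector_mat_carrier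
        mat_diag_dim det_krawtchouk_eigenvector_mat krawtchouk_real_mult_eigenvector_mat]
    unfolding K_def by blast
  moreover have "diagonal_mat ?D" by (simp add: diagonal_mat_def mat_diag_def)
  moreover have sim: "similar_mat K ?D" using \<open>similar_mat_wit K ?D ?P Q\<close> by (auto simp: similar_mat_def)
  moreover have "S = set (cols ?P)"
    unfolding S_def krawtchouk_eigenvector_image[symmetric]
    by (auto simp: krawtchouk_eigenvector_mat_def image_subset_iff simp del: upt_Suc)
  ultimately show ?thesis
    using cols_basis_of_det_nonzero[OF krawtchouk_eigenvector_mat_carrier det_krawtchouk_eigenvector_mat]
      distinct_card[of "cols ?P"] krawtchouk_eigenvector_mat_carrier[of n]
      order_char_poly_similar_mat_diag[OF sim] dim_gen_eigenspace_similar_mat_diag[OF sim]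
      card_eigensign_plus card_eigensign_minus
      krawtchouk_real_mult_vplus krawtchouk_real_mult_vminus
    unfolding K_def by auto
qed

end
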